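(* Let $\mathcal G=(\mathcal V,\mathcal E,W)$ be a network, $h\in\mathbb{R}^{\mathcal V}$, and consider the SNC game with binary actions on $\mathcal G$ with external field $h$, with set of Nash equilibria $\mathcal N$. Let $\mathcal V=\mathcal R\cup\mathcal S$, $\mathcal R\cap\mathcal S=\emptyset$, be a binary partition such that $\mathcal G_{\mathcal R}$ is structurally balanced, and let $\tau\in\{\pm1\}^{\mathcal R}$ be such that $\mathcal G_{\mathcal R}^{[\tau]}$ is unsigned. Let $h^-,h^+\in\mathbb{R}^{\mathcal R}$ be given by $$h_i^+=\tau_ih_i+w_i^{\mathcal S},\qquad h_i^-=\tau_ih_i-w_i^{\mathcal S},\qquad i\in\mathcal R.$$ Assume that $\mathcal G_{\mathcal R}^{[\tau]}$ is $(h^-,h^+)$-indecomposable and that $$w_i^{\mathcal R}-|h_i|>w_i^{\mathcal S}\qquad\forall i\in\mathcal R.$$ Then: (i) if, for each $y\in\{\tau,-\tau\}$, the set $\mathcal N_{\mathcal S}^{(y)}$ is globally BR-reachable for the $\mathcal S$-restricted game with strategy profile of players in $\mathcal R$ frozen to $y$, then the set $\overline{\mathcal N}=\{x^*\in\mathcal N:\ x^*_{\mathcal R}\in\{\tau,-\tau\}\}$ is globally BR-reachable for the SNC game; (ii) if, for each $y\in\{\tau,-\tau\}$, there exists a nonempty subset $\bar{\mathcal N}_{\mathcal S}^{(y)}\subseteq\mathcal N_{\mathcal S}^{(y)}$ that is globally BR-stable for the $\mathcal S$-restricted game with strategy profile of players in $\mathcal R$ frozen to $y$, then there exists a globally BR-stable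 (for the SNC game) subset of Nash equilibria contained in $\overline{\mathcal N}$.
   Context: A network is a triple $\mathcal G=(\mathcal V,\mathcal E,W)$ where $\mathcal V$ is a finite nonempty set, $\mathcal E\subseteq\mathcal V\times\mathcal V$, and $W\in\mathbb{R}^{\mathcal V\times\mathcal V}$ has zero diagonal and satisfies $W_{ij}\neq0$ iff $(i,j)\in\mathcal E$ (weights may have either sign; $W$ need not be symmetric). It is unsigned if $W\ge0$ entrywise. For $\mathcal U\subseteq\mathcal V$, the subnetwork $\mathcal G_{\mathcal U}$ has node set $\mathcal U$, links $\mathcal E\cap(\mathcal U\times\mathcal U)$ and weight matrix $W_{\mathcal U\mathcal U}$. A network is structurally balanced if its node set can be written as a disjoint union $\mathcal V_1\cup\mathcal V_2$ with $W_{ij}\ge0$ whenever $i,j$ lie in the same part and $W_{ij}\le0$ whenever they lie in different parts. For $\sigma\in\{\pm1\}^{\mathcal U}$ and a network on node set $\mathcal U$ with weight matrix $M$, the $[\sigma]$-transformed network has the same nodes and links and weight matrix $[\sigma]M[\sigma]$, where $[\sigma]$ is the diagonal matrix with diagonal $\sigma$. For $i\in\mathcal V$ and $\mathcal B\subseteq\mathcal V$, $w_i^{\mathcal B}=\sum_{j\in\mathcal B}|W_{ij}|$ (these quantities are unchanged by $[\sigma]$-transformations). Indecomposability: a network $(\mathcal U,\mathcal E',M)$ with $h^-\le h^+$ in $\mathbb{R}^{\mathcal U}$ is $(h^-,h^+)$-indecomposable if for every partition $\mathcal U=\mathcal U^-\cup\mathcal U^+$ into two disjoint nonempty sets there is a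 node $i$ with either $i\in\mathcal U^+$ and $w_i^{\mathcal U^+}+h_i^+<w_i^{\mathcal U^-}$, or $i\in\mathcal U^-$ and $w_i^{\mathcal U^-}-h_i^-<w_i^{\mathcal U^+}$ (degrees computed with $|M|$). The SNC game with binary actions on $\mathcal G$ with external field $h\in\mathbb{R}^{\mathcal V}$ has player set $\mathcal V$, action set $\{-1,+1\}$ for each player, strategy profiles $\mathcal X=\{\pm1\}^{\mathcal V}$, and utilities $u_i(x)=h_ix_i+x_i\sum_{j\in\mathcal V}W_{ij}x_j$. Best responses $\mathcal B_i(x_{-i})=\arg\max_{x_i\in\{\pm1\}}u_i(x_i,x_{-i})$; Nash equilibrium: $x^*_i\in\mathcal B_i(x^*_{-i})$ for all $i$. For $y\in\{\pm1\}^{\mathcal R}$, the $\mathcal S$-restricted game with strategy profile of players in $\mathcal R$ frozen to $y$ has player set $\mathcal S$, actions $\{\pm1\}$, and utilities $u_i^{(y)}(z)=u_i(y,z)$ for $i\in\mathcal S$, $z\in\{\pm1\}^{\mathcal S}$; $\mathcal N_{\mathcal S}^{(y)}$ is its set of Nash equilibria. BR-dynamics notions, for any game with binary actions and profile set $\mathcal Y$: a BR-path of length $l\ge0$ from $x$ to $y$ is a sequence $x^{(0)}=x,x^{(1)},\dots,x^{(l)}=y$ such that for each $k$ there is a player $i_k$ with $x^{(k)}_{-i_k}=x^{(k-1)}_{-i_k}$ and $x^{(k)}_{i_k}\in\mathcal B_{i_k}(x^{(k-1)}_{-i_k})\setminus\{x^{(k-1)}_{i_k}\}$. A set $\mathcal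 Y^*\subseteq\mathcal Y$ is globally BR-reachable if from every profile there is a BR-path to some element of $\mathcal Y^*$; BR-invariant if there is no BR-path from an element of $\mathcal Y^*$ to an element outside $\mathcal Y^*$; globally BR-stable if it is both. *)

theory Defs
  imports Complex_Main
begin

text \<open>Networks: node set is the finite type 'v (V = UNIV); weights W :: 'v => 'v => real,
  links are exactly the pairs with nonzero weight.\<close>

definition profiles :: "'v set \<Rightarrow> ('v \<Rightarrow> real) set" where
  "profiles P = {x. (\<forall>i\<in>P. x i = 1 \<or> x i = -1) \<and> (\<forall>i. i \<notin> P \<longrightarrow> x i = 0)}"

definition is_best_response ::
  "('v \<Rightarrow> ('v \<Rightarrow> real) \<Rightarrow> real) \<Rightarrow> 'v \<Rightarrow> ('v \<Rightarrow> real) \<Rightarrow> real \<Rightarrow> bool" where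
  "is_best_response u i x a \<longleftrightarrow> (a = 1 \<or> a = -1) \<and>
     (\<forall>b\<in>{1, -1}. u i (x(i := b)) \<le> u i (x(i := a)))"

definition nash_set :: "'v set \<Rightarrow> ('v \<Rightarrow> ('v \<Rightarrow> real) \<Rightarrow> real) \<Rightarrow> ('v \<Rightarrow> real) set" where
  "nash_set P u = {x \<in> profiles P. \<forall>i\<in>P. is_best_response u i x (x i)}"

definition br_step :: "'v set \<Rightarrow> ('v \<Rightarrow> ('v \<Rightarrow> real) \<Rightarrow> real) \<Rightarrow> ('v \<Rightarrow> real) \<Rightarrow> ('v \<Rightarrow> real) \<Rightarrow> bool" where
  "br_step P u x y \<longleftrightarrow> (\<exists>i\<in>P. y = x(i := y i) \<and> y i \<noteq> x i \<and> is_best_response u i x (y i))"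

definition br_path :: "'v set \<Rightarrow> ('v \<Rightarrow> ('v \<Rightarrow> real) \<Rightarrow> real) \<Rightarrow> ('v \<Rightarrow> real) \<Rightarrow> ('v \<Rightarrow> real) \<Rightarrow> bool" where
  "br_path P u x y \<longleftrightarrow> (\<exists>(l::nat) (xs :: nat \<Rightarrow> 'v \<Rightarrow> real).
      xs 0 = x \<and> xs l = y \<and> (\<forall>k<l. br_step P u (xs k) (xs (Suc k))))"

definition glob_br_reachable :: "'v set \<Rightarrow> ('v \<Rightarrow> ('v \<Rightarrow> real) \<Rightarrow> real) \<Rightarrow> ('v \<Rightarrow> real) set \<Rightarrow> bool" where
  "glob_br_reachable P u Y \<longleftrightarrow> (\<forall>x\<in>profiles P. \<exists>y\<in>Y. br_path P u x y)"

definition br_invariant :: "'v set \<Rightarrow> ('v \<Rightarrow> ('v \<Rightarrow> real) \<Rightarrow> real) \<Rightarrow> ('v \<Rightarrow> real) set \<Rightarrow> bool" where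
  "br_invariant P u Y \<longleftrightarrow> (\<forall>x\<in>Y. \<forall>y. br_path P u x y \<longrightarrow> y \<in> Y)"

definition glob_br_stable :: "'v set \<Rightarrow> ('v \<Rightarrow> ('v \<Rightarrow> real) \<Rightarrow> real) \<Rightarrow> ('v \<Rightarrow> real) set \<Rightarrow> bool" where
  "glob_br_stable P u Y \<longleftrightarrow> glob_br_reachable P u Y \<and> br_invariant P u Y"

definition snc_utility :: "('v::finite \<Rightarrow> 'v \<Rightarrow> real) \<Rightarrow> ('v \<Rightarrow> real) \<Rightarrow> 'v \<Rightarrow> ('v \<Rightarrow> real) \<Rightarrow> real" where
  "snc_utility W h i x = h i * x i + x i * (\<Sum>j\<in>UNIV. W i j * x j)"

definition restricted_utility ::
  "('v \<Rightarrow> ('v \<Rightarrow> real) \<Rightarrow> real) \<Rightarrow> 'v set \<Rightarrow> ('v \<Rightarrow> real) \<Rightarrow> 'v \<Rightarrow> ('v \<Rightarrow> real) \<Rightarrow> real" where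
  "restricted_utility u R y i z = u i (\<lambda>j. if j \<in> R then y j else z j)"

definition restrict_prof :: "('v \<Rightarrow> real) \<Rightarrow> 'v set \<Rightarrow> 'v \<Rightarrow> real" where
  "restrict_prof x R = (\<lambda>i. if i \<in> R then x i else 0)"

definition wdeg :: "('v \<Rightarrow> 'v \<Rightarrow> real) \<Rightarrow> 'v \<Rightarrow> 'v set \<Rightarrow> real" where
  "wdeg W i B = (\<Sum>j\<in>B. \<bar>W i j\<bar>)"

definition structurally_balanced :: "'v set \<Rightarrow> ('v \<Rightarrow> 'v \<Rightarrow> real) \<Rightarrow> bool" where
  "structurally_balanced U M \<longleftrightarrow> (\<exists>U1 U2. U1 \<union> U2 = U \<and> U1 \<inter> U2 = {} \<and>
     (\<forall>i\<in>U. \<forall>j\<in>U. ((i \<in> U1 \<longleftrightarrow> j \<in> U1) \<longrightarrow> M i j \<ge> 0) \<and>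
                     ((i \<in> U1 \<longleftrightarrow> j \<notin> U1) \<longrightarrow> M i j \<le> 0)))"

definition transformed :: "('v \<Rightarrow> real) \<Rightarrow> ('v \<Rightarrow> 'v \<Rightarrow> real) \<Rightarrow> 'v \<Rightarrow> 'v \<Rightarrow> real" where
  "transformed \<sigma> M = (\<lambda>i j. \<sigma> i * M i j * \<sigma> j)"

definition unsigned_on :: "'v set \<Rightarrow> ('v \<Rightarrow> 'v \<Rightarrow> real) \<Rightarrow> bool" where
  "unsigned_on U M \<longleftrightarrow> (\<forall>i\<in>U. \<forall>j\<in>U. M i j \<ge> 0)"

definition indecomposable ::
  "'v set \<Rightarrow> ('v \<Rightarrow> 'v \<Rightarrow> real) \<Rightarrow> ('v \<Rightarrow> real) \<Rightarrow> ('v \<Rightarrow> real) \<Rightarrow> bool" where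
  "indecomposable U M hm hp \<longleftrightarrow>
     (\<forall>Um Up. Um \<union> Up = U \<and> Um \<inter> Up = {} \<and> Um \<noteq> {} \<and> Up \<noteq> {} \<longrightarrow>
        (\<exists>i. (i \<in> Up \<and> wdeg M i Up + hp i < wdeg M i Um) \<or>
             (i \<in> Um \<and> wdeg M i Um - hm i < wdeg M i Up)))"

end

theory Submission
  imports Defs
begin

text \<open>
  Let \<open>A\<close> be the set of nodes of \<open>R\<close> playing as \<open>\<tau>\<close>. Since the \<open>[\<tau>]\<close>-transformed network is
  unsigned on \<open>R\<close>, for \<open>i \<in> R\<close> the product of \<open>\<tau>\<^sub>i\<close> and the local field of \<open>i\<close> differs from
  \<open>\<tau>\<^sub>i h\<^sub>i + w\<^sub>i\<^bsup>A\<^esup> - w\<^sub>i\<^bsup>R-A\<^esup>\<close> by at most \<open>w\<^sub>i\<^bsup>S\<^esup>\<close>, whatever \<open>S\<close> plays.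

  Hence, by the dominance hypothesis, at a consensus \<open>x\<^sub>R = \<plusminus>\<tau>\<close> every node of \<open>R\<close> strictly
  prefers its current action: \<open>R\<close> stays frozen and the dynamics are those of the
  \<open>S\<close>-restricted game, which transfers reachability and stability of its equilibria.

  Conversely a consensus is always reachable. First let nodes of \<open>A\<close> that prefer \<open>-\<tau>\<close> defect
  until none is left. If then \<open>A = {}\<close> we are at \<open>-\<tau>\<close>; otherwise indecomposability yields a
  node outside \<open>A\<close> preferring \<open>\<tau>\<close>. Its conforming creates no new defector, so \<open>A\<close> grows to \<open>R\<close>.
\<close>

section \<open>Best-response dynamics of binary games\<close>

lemma br_path_iff_rtranclp: "br_path P u x y \<longleftrightarrow> (br_step P u)\<^sup>*\<^sup>* x y"
  unfolding br_path_def rtranclp_power relpowp_fun_conv by blast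

lemma abs_profile: "x \<in> profiles P \<Longrightarrow> i \<in> P \<Longrightarrow> \<bar>x i\<bar> = 1"
  unfolding profiles_def by auto

lemma br_step_profiles:
  assumes "br_step P u x y" and "x \<in> profiles P"
  shows "y \<in> profiles P"
proof -
  obtain i where "i \<in> P" "y = x(i := y i)" "y i = 1 \<or> y i = -1"
    using assms(1) unfolding br_step_def is_best_response_def by blast
  then have "\<forall>j. j \<noteq> i \<longrightarrow> y j = x j" by (metis fun_upd_other)
  with \<open>i \<in> P\<close> \<open>y i = 1 \<or> y i = -1\<close> assms(2) show ?thesis
    unfolding profiles_def by (smt (verit) mem_Collect_eq)
qed

lemma rtranclp_br_step_profiles:
  "(br_step P u)\<^sup>*\<^sup>* x y \<Longrightarrow> x \<in> profiles P \<Longrightarrow> y \<in> profiles P"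
  by (induction rule: rtranclp_induct) (auto intro: br_step_profiles)

section \<open>Games with a frozen set of players\<close>

definition merge_prof :: "'v set \<Rightarrow> ('v \<Rightarrow> real) \<Rightarrow> ('v \<Rightarrow> real) \<Rightarrow> 'v \<Rightarrow> real" where
  "merge_prof R y z = (\<lambda>j. if j \<in> R then y j else z j)"

lemma merge_prof_upd: "i \<notin> R \<Longrightarrow> merge_prof R y (z(i := b)) = (merge_prof R y z)(i := b)"
  unfolding merge_prof_def by auto

lemma restrict_merge_prof: "y \<in> profiles R \<Longrightarrow> restrict_prof (merge_prof R y z) R = y"
  unfolding restrict_prof_def merge_prof_def profiles_def by auto

lemma merge_prof_profiles:
  "R \<union> S = UNIV \<Longrightarrow> y \<in> profiles R \<Longrightarrow> z \<in> profiles S \<Longrightarrow> merge_prof R y z \<in> profiles UNIV"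
  unfolding merge_prof_def profiles_def by auto

lemma profile_eq_merge_restrict:
  assumes "R \<union> S = UNIV" and "x \<in> profiles UNIV"
  shows "x = merge_prof R (restrict_prof x R) (restrict_prof x S)"
    and "restrict_prof x S \<in> profiles S"
  using assms unfolding merge_prof_def restrict_prof_def profiles_def by (auto simp: fun_eq_iff)

lemma restricted_utility_merge_prof: "restricted_utility u R y i z = u i (merge_prof R y z)"
  unfolding restricted_utility_def merge_prof_def ..

lemma is_best_response_restricted:
  "i \<notin> R \<Longrightarrow> is_best_response (restricted_utility u R y) i z a \<longleftrightarrow>
     is_best_response u i (merge_prof R y z) a"
  unfolding is_best_response_def restricted_utility_merge_prof by (simp add: merge_prof_upd)

lemma br_step_restricted_lift:
  assumes "R \<inter> S = {}" and "br_step S (restricted_utility u R y) z z'"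
  shows "br_step UNIV u (merge_prof R y z) (merge_prof R y z')"
proof -
  obtain i where i: "i \<in> S" "z' = z(i := z' i)" "z' i \<noteq> z i"
    and br: "is_best_response (restricted_utility u R y) i z (z' i)"
    using assms(2) unfolding br_step_def by blast
  have "i \<notin> R" using assms(1) i(1) by blast
  then show ?thesis
    using i br merge_prof_upd[of i R y z "z' i"]
    unfolding br_step_def is_best_response_restricted[OF \<open>i \<notin> R\<close>]
    by (intro bexI[of _ i]) (auto simp: merge_prof_def)
qed

lemma rtranclp_br_step_restricted_lift:
  assumes "R \<inter> S = {}" and "(br_step S (restricted_utility u R y))\<^sup>*\<^sup>* z z'"
  shows "(br_step UNIV u)\<^sup>*\<^sup>* (merge_prof R y z) (merge_prof R y z')"
  using assms(2)
  by (induction rule: rtranclp_induct)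
    (auto intro: rtranclp.rtrancl_into_rtrancl br_step_restricted_lift[OF assms(1)])

locale frozen_reduction =
  fixes u :: "'v \<Rightarrow> ('v \<Rightarrow> real) \<Rightarrow> real" and R S :: "'v set"
    and Y :: "('v \<Rightarrow> real) set"
  assumes partition: "R \<union> S = UNIV" "R \<inter> S = {}"
    and frozen_profiles: "Y \<subseteq> profiles R"
    and frozen_strict: "\<lbrakk>y \<in> Y; z \<in> profiles S; i \<in> R\<rbrakk> \<Longrightarrow>
      is_best_response u i (merge_prof R y z) a \<longleftrightarrow> a = y i"
    and reach_frozen: "x \<in> profiles UNIV \<Longrightarrow>
      \<exists>x'. (br_step UNIV u)\<^sup>*\<^sup>* x x' \<and> restrict_prof x' R \<in> Y"
begin

abbreviation ru :: "('v \<Rightarrow> real) \<Rightarrow> 'v \<Rightarrow> ('v \<Rightarrow> real) \<Rightarrow> real" where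
  "ru y \<equiv> restricted_utility u R y"

lemma restrict_merge_frozen: "y \<in> Y \<Longrightarrow> restrict_prof (merge_prof R y z) R = y"
  using restrict_merge_prof frozen_profiles by blast

lemma frozen_path_projects:
  assumes y: "y \<in> Y" and z: "z \<in> profiles S"
    and path: "(br_step UNIV u)\<^sup>*\<^sup>* (merge_prof R y z) x"
  shows "\<exists>z'. x = merge_prof R y z' \<and> (br_step S (ru y))\<^sup>*\<^sup>* z z'"
  using path
proof (induction rule: rtranclp_induct)
  case base
  show ?case by blast
next
  case (step a b)
  then obtain z' where a: "a = merge_prof R y z'" and z': "(br_step S (ru y))\<^sup>*\<^sup>* z z'"
    by blast
  have z'_prof: "z' \<in> profiles S" using rtranclp_br_step_profiles[OF z' z] .
  obtain i where b: "b = a(i := b i)" "b i \<noteq> a i" and br: "is_best_response u i a (b i)"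
    using step.hyps(2) unfolding br_step_def by blast
  have "i \<notin> R"
  proof
    assume "i \<in> R"
    then have "b i = y i" using frozen_strict[OF y z'_prof] br unfolding a by blast
    moreover have "a i = y i" using \<open>i \<in> R\<close> unfolding a merge_prof_def by simp
    ultimately show False using b(2) by simp
  qed
  then have "i \<in> S" using partition(1) by blast
  define z'' where "z'' = z'(i := b i)"
  have "b = merge_prof R y z''"
    using b(1) merge_prof_upd[OF \<open>i \<notin> R\<close>] unfolding a z''_def by simp
  moreover have "br_step S (ru y) z' z''"
    unfolding br_step_def
  proof (intro bexI[of _ i] conjI)
    have "a i = z' i" using \<open>i \<notin> R\<close> unfolding a merge_prof_def by simp
    then show "z'' i \<noteq> z' i" using b(2) unfolding z''_def by simp
    show "is_best_response (ru y) i z' (z'' i)"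
      unfolding is_best_response_restricted[OF \<open>i \<notin> R\<close>] z''_def using br a by simp
  qed (simp_all add: z''_def \<open>i \<in> S\<close>)
  ultimately show ?case using rtranclp.rtrancl_into_rtrancl[OF z'] by blast
qed

lemma nash_merge_prof:
  assumes y: "y \<in> Y" and z: "z \<in> nash_set S (ru y)"
  shows "merge_prof R y z \<in> nash_set UNIV u"
proof -
  have z_prof: "z \<in> profiles S" using z unfolding nash_set_def by blast
  have "is_best_response u i (merge_prof R y z) (merge_prof R y z i)" for i
  proof (cases "i \<in> R")
    case True
    then show ?thesis using frozen_strict[OF y z_prof True] by (simp add: merge_prof_def)
  next
    case False
    then have "i \<in> S" using partition(1) by blast
    then have "is_best_response (ru y) i z (z i)" using z unfolding nash_set_def by blast
    then have "is_best_response u i (merge_prof R y z) (z i)"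
      using is_best_response_restricted[OF False] by blast
    then show ?thesis using False by (simp add: merge_prof_def)
  qed
  moreover have "merge_prof R y z \<in> profiles UNIV"
    using merge_prof_profiles[OF partition(1)] y z_prof frozen_profiles by blast
  ultimately show ?thesis unfolding nash_set_def by blast
qed

lemma glob_br_reachable_via_restricted:
  assumes "\<And>y z. y \<in> Y \<Longrightarrow> z \<in> profiles S \<Longrightarrow>
    \<exists>z'. (br_step S (ru y))\<^sup>*\<^sup>* z z' \<and> merge_prof R y z' \<in> F"
  shows "glob_br_reachable UNIV u F"
  unfolding glob_br_reachable_def br_path_iff_rtranclp
proof
  fix x :: "'v \<Rightarrow> real"
  assume x: "x \<in> profiles UNIV"
  obtain x' where x': "(br_step UNIV u)\<^sup>*\<^sup>* x x'" and y: "restrict_prof x' R \<in> Y"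
    using reach_frozen[OF x] by blast
  have "x' \<in> profiles UNIV" using rtranclp_br_step_profiles[OF x' x] .
  note x'_eq = profile_eq_merge_restrict[OF partition(1) this]
  obtain z' where restricted_path: "(br_step S (ru (restrict_prof x' R)))\<^sup>*\<^sup>* (restrict_prof x' S) z'"
    and F: "merge_prof R (restrict_prof x' R) z' \<in> F"
    using assms[OF y x'_eq(2)] by blast
  from rtranclp_br_step_restricted_lift[OF partition(2) restricted_path]
  have "(br_step UNIV u)\<^sup>*\<^sup>* x' (merge_prof R (restrict_prof x' R) z')"
    unfolding x'_eq(1)[symmetric] .
  then show "\<exists>y\<in>F. (br_step UNIV u)\<^sup>*\<^sup>* x y" using x' F by (meson rtranclp_trans)
qed

lemma glob_br_reachable_frozen_nash:
  assumes "\<forall>y\<in>Y. glob_br_reachable S (ru y) (nash_set S (ru y))"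
  shows "glob_br_reachable UNIV u {x \<in> nash_set UNIV u. restrict_prof x R \<in> Y}"
proof (rule glob_br_reachable_via_restricted)
  fix y z
  assume y: "y \<in> Y" and z: "z \<in> profiles S"
  obtain z' where z': "z' \<in> nash_set S (ru y)" and path: "(br_step S (ru y))\<^sup>*\<^sup>* z z'"
    using assms y z unfolding glob_br_reachable_def br_path_iff_rtranclp by blast
  have "restrict_prof (merge_prof R y z') R \<in> Y"
    using restrict_merge_frozen[OF y] y by simp
  with nash_merge_prof[OF y z'] path
  show "\<exists>z'. (br_step S (ru y))\<^sup>*\<^sup>* z z' \<and>
      merge_prof R y z' \<in> {x \<in> nash_set UNIV u. restrict_prof x R \<in> Y}"
    by blast
qed

lemma glob_br_stable_frozen_nash:
  assumes "\<forall>y\<in>Y. \<exists>N \<subseteq> nash_set S (ru y). glob_br_stable S (ru y) N"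
  shows "\<exists>N \<subseteq> {x \<in> nash_set UNIV u. restrict_prof x R \<in> Y}. glob_br_stable UNIV u N"
proof -
  obtain N where N: "\<And>y. y \<in> Y \<Longrightarrow> N y \<subseteq> nash_set S (ru y) \<and> glob_br_stable S (ru y) (N y)"
    using bchoice[OF assms] by blast
  define NN where "NN = {merge_prof R y z | y z. y \<in> Y \<and> z \<in> N y}"
  have "NN \<subseteq> {x \<in> nash_set UNIV u. restrict_prof x R \<in> Y}"
  proof
    fix x
    assume "x \<in> NN"
    then obtain y z where x: "x = merge_prof R y z" and y: "y \<in> Y" and z: "z \<in> N y"
      unfolding NN_def by blast
    have "x \<in> nash_set UNIV u" using nash_merge_prof[OF y] N[OF y] z x by blast
    moreover have "restrict_prof x R \<in> Y"
      using restrict_merge_frozen[OF y] y x by simp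
    ultimately show "x \<in> {x \<in> nash_set UNIV u. restrict_prof x R \<in> Y}" by blast
  qed
  moreover have "glob_br_reachable UNIV u NN"
  proof (rule glob_br_reachable_via_restricted)
    fix y z
    assume y: "y \<in> Y" and "z \<in> profiles S"
    then obtain z' where "z' \<in> N y" "(br_step S (ru y))\<^sup>*\<^sup>* z z'"
      using N[OF y] unfolding glob_br_stable_def glob_br_reachable_def br_path_iff_rtranclp
      by blast
    then show "\<exists>z'. (br_step S (ru y))\<^sup>*\<^sup>* z z' \<and> merge_prof R y z' \<in> NN"
      using y unfolding NN_def by blast
  qed
  moreover have "br_invariant UNIV u NN"
    unfolding br_invariant_def br_path_iff_rtranclp
  proof (intro ballI allI impI)
    fix x x'
    assume "x \<in> NN" and path: "(br_step UNIV u)\<^sup>*\<^sup>* x x'"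
    then obtain y z where x: "x = merge_prof R y z" and y: "y \<in> Y" and z: "z \<in> N y"
      unfolding NN_def by blast
    have "z \<in> profiles S" using N[OF y] z unfolding nash_set_def by blast
    then obtain z' where x': "x' = merge_prof R y z'" and "(br_step S (ru y))\<^sup>*\<^sup>* z z'"
      using frozen_path_projects[OF y] path x by blast
    then have "z' \<in> N y"
      using N[OF y] z unfolding glob_br_stable_def br_invariant_def br_path_iff_rtranclp by blast
    then show "x' \<in> NN" using x' y unfolding NN_def by blast
  qed
  ultimately show ?thesis unfolding glob_br_stable_def by blast
qed

end

section \<open>Local fields of the SNC game\<close>

definition local_field :: "('v::finite \<Rightarrow> 'v \<Rightarrow> real) \<Rightarrow> ('v \<Rightarrow> real) \<Rightarrow> ('v \<Rightarrow> real) \<Rightarrow> 'v \<Rightarrow> real"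
  where "local_field W h x i = h i + (\<Sum>j\<in>UNIV. W i j * x j)"

lemma snc_utility_upd:
  assumes "W i i = 0"
  shows "snc_utility W h i (x(i := b)) = b * local_field W h x i"
proof -
  have "(\<Sum>j\<in>UNIV. W i j * (x(i := b)) j) = (\<Sum>j\<in>UNIV. W i j * x j)"
    using assms by (intro sum.cong) auto
  then show ?thesis unfolding snc_utility_def local_field_def by (simp add: algebra_simps)
qed

lemma snc_best_response_sign:
  assumes "W i i = 0" and "c = 1 \<or> c = -1" and "c * local_field W h x i > 0"
  shows "is_best_response (snc_utility W h) i x a \<longleftrightarrow> a = c"
  using assms unfolding is_best_response_def snc_utility_upd[of W i, OF assms(1)] by auto

lemma snc_br_step_sign:
  assumes "W i i = 0" and "c = 1 \<or> c = -1" and "c * local_field W h x i > 0" and "x i \<noteq> c"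
  shows "br_step UNIV (snc_utility W h) x (x(i := c))"
  using assms snc_best_response_sign[OF assms(1-3)] unfolding br_step_def by auto

lemma wdeg_mono:
  fixes W :: "'v::finite \<Rightarrow> 'v \<Rightarrow> real"
  shows "A \<subseteq> B \<Longrightarrow> wdeg W i A \<le> wdeg W i B"
  unfolding wdeg_def by (rule sum_mono2) auto

lemma wdeg_nonneg: "0 \<le> wdeg W i A"
  unfolding wdeg_def by (rule sum_nonneg) simp

section \<open>Reaching consensus on a structurally balanced set\<close>

locale signed_snc =
  fixes W :: "'v::finite \<Rightarrow> 'v \<Rightarrow> real" and h :: "'v \<Rightarrow> real"
    and R S :: "'v set" and \<tau> :: "'v \<Rightarrow> real"
  assumes diag: "\<forall>i. W i i = 0"
    and partition: "R \<union> S = UNIV" "R \<inter> S = {}"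
    and tau: "\<tau> \<in> profiles R"
    and unsigned: "unsigned_on R (transformed \<tau> W)"
begin

abbreviation U :: "'v \<Rightarrow> ('v \<Rightarrow> real) \<Rightarrow> real" where
  "U \<equiv> snc_utility W h"

definition agree_set :: "('v \<Rightarrow> real) \<Rightarrow> 'v set" where
  "agree_set x = {j \<in> R. x j = \<tau> j}"

definition h_plus :: "'v \<Rightarrow> real" where
  "h_plus = (\<lambda>i. \<tau> i * h i + wdeg W i S)"

definition h_minus :: "'v \<Rightarrow> real" where
  "h_minus = (\<lambda>i. \<tau> i * h i - wdeg W i S)"

definition defection_free :: "'v set \<Rightarrow> bool" where
  "defection_free A \<longleftrightarrow> (\<forall>i\<in>A. wdeg W i (R - A) \<le> wdeg W i A + h_plus i)"

lemma tau_values: "i \<in> R \<Longrightarrow> \<tau> i = 1 \<or> \<tau> i = -1"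
  using tau unfolding profiles_def by blast

lemma tau_outside: "i \<notin> R \<Longrightarrow> \<tau> i = 0"
  using tau unfolding profiles_def by blast

lemma abs_tau: "i \<in> R \<Longrightarrow> \<bar>\<tau> i\<bar> = 1"
  using tau_values by fastforce

lemma neg_tau_profile: "(\<lambda>i. - \<tau> i) \<in> profiles R"
  using tau unfolding profiles_def by auto

lemma signed_weight:
  assumes "i \<in> R" and "j \<in> R"
  shows "\<tau> i * W i j * \<tau> j = \<bar>W i j\<bar>"
proof -
  have "0 \<le> \<tau> i * W i j * \<tau> j"
    using unsigned assms unfolding unsigned_on_def transformed_def by blast
  moreover have "\<bar>\<tau> i * W i j * \<tau> j\<bar> = \<bar>W i j\<bar>"
    using abs_tau[OF assms(1)] abs_tau[OF assms(2)] by (simp add: abs_mult)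
  ultimately show ?thesis by simp
qed

lemma wdeg_transformed: "i \<in> R \<Longrightarrow> B \<subseteq> R \<Longrightarrow> wdeg (transformed \<tau> W) i B = wdeg W i B"
  unfolding wdeg_def transformed_def using abs_tau by (intro sum.cong) (auto simp: abs_mult)

lemma disagree_value: "x \<in> profiles UNIV \<Longrightarrow> j \<in> R - agree_set x \<Longrightarrow> x j = - \<tau> j"
  using tau_values[of j] unfolding profiles_def agree_set_def by auto

lemma field_estimate:
  assumes x: "x \<in> profiles UNIV" and i: "i \<in> R"
  shows "\<bar>\<tau> i * local_field W h x i - \<tau> i * h i
           - (wdeg W i (agree_set x) - wdeg W i (R - agree_set x))\<bar> \<le> wdeg W i S"
proof -
  let ?A = "agree_set x" and ?t = "\<lambda>j. \<tau> i * W i j * x j"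
  have "\<tau> i * local_field W h x i - \<tau> i * h i = sum ?t UNIV"
    unfolding local_field_def by (simp add: algebra_simps sum_distrib_left)
  also have "\<dots> = sum ?t R + sum ?t S"
    using sum.union_disjoint[of R S ?t] partition by simp
  also have "sum ?t R = sum ?t ?A + sum ?t (R - ?A)"
    using sum.subset_diff[of ?A R ?t] unfolding agree_set_def by auto
  also have "sum ?t ?A = wdeg W i ?A"
    unfolding wdeg_def using signed_weight[OF i] by (intro sum.cong) (auto simp: agree_set_def)
  also have "sum ?t (R - ?A) = - wdeg W i (R - ?A)"
    unfolding wdeg_def sum_negf[symmetric] using signed_weight[OF i] disagree_value[OF x]
    by (intro sum.cong) auto
  finally have "\<tau> i * local_field W h x i - \<tau> i * h i
      - (wdeg W i ?A - wdeg W i (R - ?A)) = sum ?t S" by simp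
  also have "\<bar>sum ?t S\<bar> \<le> (\<Sum>j\<in>S. \<bar>?t j\<bar>)" by (rule sum_abs)
  also have "\<dots> = wdeg W i S"
    unfolding wdeg_def using abs_tau[OF i] abs_profile[OF x]
    by (intro sum.cong) (auto simp: abs_mult)
  finally show ?thesis .
qed

lemma agree_set_consensus:
  assumes x: "x \<in> profiles UNIV"
  shows "restrict_prof x R = \<tau> \<longleftrightarrow> agree_set x = R"
    and "restrict_prof x R = (\<lambda>i. - \<tau> i) \<longleftrightarrow> agree_set x = {}"
proof -
  have "x j \<noteq> \<tau> j \<longleftrightarrow> x j = - \<tau> j" if "j \<in> R" for j
    using tau_values[OF that] x unfolding profiles_def by auto
  then show "restrict_prof x R = \<tau> \<longleftrightarrow> agree_set x = R"
    and "restrict_prof x R = (\<lambda>i. - \<tau> i) \<longleftrightarrow> agree_set x = {}"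
    unfolding restrict_prof_def agree_set_def fun_eq_iff using tau_outside by auto
qed

lemma consensus_strict:
  assumes dom: "\<forall>i\<in>R. wdeg W i R - \<bar>h i\<bar> > wdeg W i S"
    and x: "x \<in> profiles UNIV" and cons: "restrict_prof x R \<in> {\<tau>, (\<lambda>i. - \<tau> i)}"
    and i: "i \<in> R"
  shows "x i * local_field W h x i > 0"
proof -
  have est: "\<bar>\<tau> i * local_field W h x i - \<tau> i * h i
      - (wdeg W i (agree_set x) - wdeg W i (R - agree_set x))\<bar> \<le> wdeg W i S"
    using field_estimate[OF x i] .
  have bounds: "\<bar>\<tau> i * h i\<bar> = \<bar>h i\<bar>" "wdeg W i {} = 0" "wdeg W i R - \<bar>h i\<bar> > wdeg W i S"
    using abs_tau[OF i] dom i unfolding wdeg_def by (auto simp: abs_mult)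
  from cons show ?thesis
  proof
    assume cons_tau: "restrict_prof x R = \<tau>"
    then have "x i = \<tau> i" using fun_cong[OF cons_tau, of i] i unfolding restrict_prof_def by simp
    moreover have "agree_set x = R" using cons_tau agree_set_consensus(1)[OF x] by blast
    ultimately show ?thesis using est bounds by (auto simp: abs_le_iff)
  next
    assume "restrict_prof x R \<in> {\<lambda>i. - \<tau> i}"
    then have cons_neg: "restrict_prof x R = (\<lambda>i. - \<tau> i)" by blast
    then have "x i = - \<tau> i" using fun_cong[OF cons_neg, of i] i unfolding restrict_prof_def by simp
    moreover have "agree_set x = {}" using cons_neg agree_set_consensus(2)[OF x] by blast
    ultimately show ?thesis using est bounds by (auto simp: abs_le_iff)
  qed
qed

lemma consensus_best_response:
  assumes dom: "\<forall>i\<in>R. wdeg W i R - \<bar>h i\<bar> > wdeg W i S"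
    and y: "y \<in> {\<tau>, (\<lambda>i. - \<tau> i)}" and z: "z \<in> profiles S" and i: "i \<in> R"
  shows "is_best_response U i (merge_prof R y z) a \<longleftrightarrow> a = y i"
proof -
  let ?x = "merge_prof R y z"
  have "y \<in> profiles R" using y tau neg_tau_profile by blast
  then have x: "?x \<in> profiles UNIV" and "restrict_prof ?x R = y"
    using merge_prof_profiles[OF partition(1) _ z] restrict_merge_prof by auto
  then have "?x i * local_field W h ?x i > 0" using consensus_strict[OF dom x] y i by simp
  moreover have "?x i = 1 \<or> ?x i = -1" using x unfolding profiles_def by blast
  ultimately show ?thesis
    using snc_best_response_sign[of W i, OF diag[rule_format]] i by (simp add: merge_prof_def)
qed

lemma defect_step:
  assumes x: "x \<in> profiles UNIV" and i: "i \<in> agree_set x"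
    and defect: "wdeg W i (agree_set x) + h_plus i < wdeg W i (R - agree_set x)"
  shows "br_step UNIV U x (x(i := - \<tau> i))"
proof -
  have "i \<in> R" and "x i = \<tau> i" using i unfolding agree_set_def by auto
  have "\<tau> i * local_field W h x i < 0"
    using field_estimate[OF x \<open>i \<in> R\<close>] defect unfolding h_plus_def abs_le_iff by linarith
  then show ?thesis
    using snc_br_step_sign[of W i "- \<tau> i"] diag tau_values[OF \<open>i \<in> R\<close>] \<open>x i = \<tau> i\<close> by auto
qed

lemma conform_step:
  assumes x: "x \<in> profiles UNIV" and i: "i \<in> R - agree_set x"
    and conform: "wdeg W i (R - agree_set x) - h_minus i < wdeg W i (agree_set x)"
  shows "br_step UNIV U x (x(i := \<tau> i))"
proof -
  have "i \<in> R" and "x i = - \<tau> i" using i disagree_value[OF x] by auto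
  have "\<tau> i * local_field W h x i > 0"
    using field_estimate[OF x \<open>i \<in> R\<close>] conform unfolding h_minus_def abs_le_iff by linarith
  then show ?thesis
    using snc_br_step_sign[of W i "\<tau> i"] diag tau_values[OF \<open>i \<in> R\<close>] \<open>x i = - \<tau> i\<close> by auto
qed

lemma agree_set_upd_neg: "i \<in> R \<Longrightarrow> agree_set (x(i := - \<tau> i)) = agree_set x - {i}"
  using tau_values unfolding agree_set_def by force

lemma agree_set_upd_tau: "i \<in> R \<Longrightarrow> agree_set (x(i := \<tau> i)) = insert i (agree_set x)"
  unfolding agree_set_def by auto

lemma reach_defection_free:
  "x \<in> profiles UNIV \<Longrightarrow> \<exists>x'. (br_step UNIV U)\<^sup>*\<^sup>* x x' \<and> defection_free (agree_set x')"
proof (induction "card (agree_set x)" arbitrary: x rule: less_induct)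
  case less
  show ?case
  proof (cases "defection_free (agree_set x)")
    case True
    then show ?thesis by blast
  next
    case False
    then obtain i where i: "i \<in> agree_set x"
      and "wdeg W i (agree_set x) + h_plus i < wdeg W i (R - agree_set x)"
      unfolding defection_free_def by force
    then have step: "br_step UNIV U x (x(i := - \<tau> i))" using defect_step less.prems by blast
    have "i \<in> R" using i unfolding agree_set_def by blast
    have "card (agree_set (x(i := - \<tau> i))) < card (agree_set x)"
      unfolding agree_set_upd_neg[OF \<open>i \<in> R\<close>] using i by (intro card_Diff1_less) auto
    with less.hyps br_step_profiles[OF step less.prems] obtain x'
      where "(br_step UNIV U)\<^sup>*\<^sup>* (x(i := - \<tau> i)) x'" "defection_free (agree_set x')"
      by blast
    then show ?thesis using converse_rtranclp_into_rtranclp[of "br_step UNIV U", OF step] by blast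
  qed
qed

lemma defection_free_insert:
  assumes free: "defection_free A" and i: "i \<in> R - A"
    and conform: "wdeg W i (R - A) - h_minus i < wdeg W i A"
  shows "defection_free (insert i A)"
  unfolding defection_free_def
proof
  fix k
  assume k: "k \<in> insert i A"
  have "wdeg W k (R - insert i A) \<le> wdeg W k (R - A)" "wdeg W k A \<le> wdeg W k (insert i A)"
    by (auto intro: wdeg_mono)
  moreover have "h_minus i \<le> h_plus i"
    unfolding h_minus_def h_plus_def using wdeg_nonneg[of W i S] by simp
  ultimately show "wdeg W k (R - insert i A) \<le> wdeg W k (insert i A) + h_plus k"
    using k free conform unfolding defection_free_def by fastforce
qed

lemma indecomposable_conformer:
  assumes indec: "indecomposable R (transformed \<tau> W) h_minus h_plus"
    and A: "A \<subseteq> R" "A \<noteq> {}" "A \<noteq> R" and free: "defection_free A"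
  shows "\<exists>i\<in>R - A. wdeg W i (R - A) - h_minus i < wdeg W i A"
proof -
  have "(R - A) \<union> A = R" "(R - A) \<inter> A = {}" "R - A \<noteq> {}" using A by auto
  then obtain i where
    "(i \<in> A \<and> wdeg (transformed \<tau> W) i A + h_plus i < wdeg (transformed \<tau> W) i (R - A)) \<or>
     (i \<in> R - A \<and> wdeg (transformed \<tau> W) i (R - A) - h_minus i < wdeg (transformed \<tau> W) i A)"
    using indec A(2) unfolding indecomposable_def by blast
  moreover have "i \<in> R \<Longrightarrow> wdeg (transformed \<tau> W) i A = wdeg W i A"
    "i \<in> R \<Longrightarrow> wdeg (transformed \<tau> W) i (R - A) = wdeg W i (R - A)"
    using wdeg_transformed A(1) by auto
  ultimately show ?thesis using free A(1) unfolding defection_free_def by force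
qed

lemma reach_full_agreement:
  assumes indec: "indecomposable R (transformed \<tau> W) h_minus h_plus"
  shows "x \<in> profiles UNIV \<Longrightarrow> defection_free (agree_set x) \<Longrightarrow> agree_set x \<noteq> {} \<Longrightarrow>
    \<exists>x'. (br_step UNIV U)\<^sup>*\<^sup>* x x' \<and> agree_set x' = R"
proof (induction "card (R - agree_set x)" arbitrary: x rule: less_induct)
  case less
  have A: "agree_set x \<subseteq> R" unfolding agree_set_def by blast
  show ?case
  proof (cases "agree_set x = R")
    case True
    then show ?thesis by blast
  next
    case False
    then obtain i where i: "i \<in> R - agree_set x"
      and conform: "wdeg W i (R - agree_set x) - h_minus i < wdeg W i (agree_set x)"
      using indecomposable_conformer[OF indec A] less.prems by blast
    then have step: "br_step UNIV U x (x(i := \<tau> i))" using conform_step less.prems(1) by blast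
    have agree': "agree_set (x(i := \<tau> i)) = insert i (agree_set x)"
      using agree_set_upd_tau i by blast
    have "R - agree_set (x(i := \<tau> i)) = (R - agree_set x) - {i}" unfolding agree' by blast
    then have "card (R - agree_set (x(i := \<tau> i))) < card (R - agree_set x)"
      using card_Diff1_less[of "R - agree_set x" i] i by simp
    moreover have "defection_free (agree_set (x(i := \<tau> i)))"
      unfolding agree' using defection_free_insert less.prems(2) i conform by blast
    ultimately obtain x' where "(br_step UNIV U)\<^sup>*\<^sup>* (x(i := \<tau> i)) x'" "agree_set x' = R"
      using less.hyps br_step_profiles[OF step less.prems(1)] agree' by blast
    then show ?thesis using converse_rtranclp_into_rtranclp[of "br_step UNIV U", OF step] by blast
  qed
qed

lemma reach_consensus:
  assumes indec: "indecomposable R (transformed \<tau> W) h_minus h_plus"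
    and x: "x \<in> profiles UNIV"
  shows "\<exists>x'. (br_step UNIV U)\<^sup>*\<^sup>* x x' \<and> restrict_prof x' R \<in> {\<tau>, (\<lambda>i. - \<tau> i)}"
proof -
  obtain x1 where path1: "(br_step UNIV U)\<^sup>*\<^sup>* x x1" and free: "defection_free (agree_set x1)"
    using reach_defection_free[OF x] by blast
  have x1: "x1 \<in> profiles UNIV" using rtranclp_br_step_profiles[OF path1 x] .
  show ?thesis
  proof (cases "agree_set x1 = {}")
    case True
    then show ?thesis using path1 agree_set_consensus(2)[OF x1] by blast
  next
    case False
    then obtain x2 where path2: "(br_step UNIV U)\<^sup>*\<^sup>* x1 x2" and "agree_set x2 = R"
      using reach_full_agreement[OF indec x1 free] by blast
    moreover have "x2 \<in> profiles UNIV" using rtranclp_br_step_profiles[OF path2 x1] .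
    ultimately have "restrict_prof x2 R = \<tau>" using agree_set_consensus(1) by blast
    then show ?thesis using rtranclp_trans[OF path1 path2] by blast
  qed
qed

lemma frozen_reduction_consensus:
  assumes "indecomposable R (transformed \<tau> W) h_minus h_plus"
    and "\<forall>i\<in>R. wdeg W i R - \<bar>h i\<bar> > wdeg W i S"
  shows "frozen_reduction U R S {\<tau>, (\<lambda>i. - \<tau> i)}"
  using assms partition tau neg_tau_profile consensus_best_response reach_consensus
  by unfold_locales auto

end

theorem theorem2:
  fixes W :: "'v::finite \<Rightarrow> 'v \<Rightarrow> real" and h :: "'v \<Rightarrow> real"
    and R S :: "'v set" and \<tau> :: "'v \<Rightarrow> real"
  assumes diag: "\<forall>i. W i i = 0"
    and part: "R \<union> S = UNIV" "R \<inter> S = {}"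
    and bal: "structurally_balanced R W"
    and tau: "\<tau> \<in> profiles R"
    and uns: "unsigned_on R (transformed \<tau> W)"
    and indec: "indecomposable R (transformed \<tau> W)
                  (\<lambda>i. \<tau> i * h i - wdeg W i S) (\<lambda>i. \<tau> i * h i + wdeg W i S)"
    and dom: "\<forall>i\<in>R. wdeg W i R - \<bar>h i\<bar> > wdeg W i S"
  shows
   "((\<forall>y\<in>{\<tau>, (\<lambda>i. - \<tau> i)}.
        glob_br_reachable S (restricted_utility (snc_utility W h) R y)
          (nash_set S (restricted_utility (snc_utility W h) R y)))
     \<longrightarrow> glob_br_reachable UNIV (snc_utility W h)
          {x \<in> nash_set UNIV (snc_utility W h). restrict_prof x R \<in> {\<tau>, (\<lambda>i. - \<tau> i)}})
    \<and>
    ((\<forall>y\<in>{\<tau>, (\<lambda>i. - \<tau> i)}. \<exists>N. N \<noteq> {} \<and>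
        N \<subseteq> nash_set S (restricted_utility (snc_utility W h) R y) \<and>
        glob_br_stable S (restricted_utility (snc_utility W h) R y) N)
     \<longrightarrow> (\<exists>N. N \<subseteq> {x \<in> nash_set UNIV (snc_utility W h). restrict_prof x R \<in> {\<tau>, (\<lambda>i. - \<tau> i)}} \<and>
             glob_br_stable UNIV (snc_utility W h) N))"
proof -
  \<comment> \<open>\<open>bal\<close> follows from \<open>tau\<close> and \<open>uns\<close>.\<close>
  interpret signed_snc W h R S \<tau>
    using diag part tau uns by unfold_locales
  interpret frozen_reduction "snc_utility W h" R S "{\<tau>, (\<lambda>i. - \<tau> i)}"
    using frozen_reduction_consensus indec dom unfolding h_minus_def h_plus_def by blast
  show ?thesis
    using glob_br_reachable_frozen_nash glob_br_stable_frozen_nash by blast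
qed

end
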